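(* Let $f:\mathbb{R}^n \to \mathbb{R}$ be strongly convex and piecewise linear-quadratic, with a fixed representation by polyhedral sets $F_1,\dots,F_p$ as described in the context, and let $C \subset \mathbb{R}^n$ be a nonempty closed convex set. Then for every $R>0$ there exists $L>0$ such that for all $x \in B_R$ and all $x^* \in \partial f(x)$, \[ \operatorname{dist}_f^{x^*}(x,C)^2 \le \begin{cases} L \cdot \operatorname{dist}(x,C)^2, & \text{if } F_x \cap C=\emptyset, \\ L \cdot \operatorname{dist}(x,F_x \cap C)^2, & \text{if } F_x \cap C \neq\emptyset. \end{cases} \]
   Context: $f$ is strongly convex if there is $\alpha>0$ with $f(y)\ge f(x)+\langle x^*,y-x\rangle+\frac{\alpha}{2}\|y-x\|_2^2$ for all $x,y\in\mathbb{R}^n$, $x^*\in\partial f(x)$. A convex $f:\mathbb{R}^n\to\mathbb{R}$ is piecewise linear-quadratic if there are finitely many polyhedral sets $F_i\subset\mathbb{R}^n$, $i\in I=\{1,\dots,p\}$, whose union is $\mathbb{R}^n$, such that on each $F_i$, $f(x)=\frac12\langle x,A_ix\rangle+\langle a_i,x\rangle+\alpha_i$ with symmetric positive semidefinite $A_i\in\mathbb{R}^{n\times n}$, $a_i\in\mathbb{R}^n$, $\alpha_i\in\mathbb{R}$. For $x\in\mathbb{R}^n$ set $I_f(x)=\{i\in I: x\in F_i\}$ and $F_x=\bigcap_{i\in I_f(x)}F_i$. $B_R=\{x\in\mathbb{R}^n:\|x\|_2\le R\}$. For $x^*\in\partial f(x)$, the Bregman distance is $D_f^{x^*}(x,y)=f(y)-f(x)-\langle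 x^*,y-x\rangle$ and $\operatorname{dist}_f^{x^*}(x,C)^2:=\min_{y\in C}D_f^{x^*}(x,y)$. $\operatorname{dist}(x,S)$ is the Euclidean distance from $x$ to a set $S$. *)

theory Defs
  imports "HOL-Analysis.Analysis"
begin

definition subdiff :: "(real^'n \<Rightarrow> real) \<Rightarrow> real^'n \<Rightarrow> (real^'n) set" where
  "subdiff f x = {s. \<forall>y. f y \<ge> f x + s \<bullet> (y - x)}"

definition strongly_convex :: "(real^'n \<Rightarrow> real) \<Rightarrow> bool" where
  "strongly_convex f \<longleftrightarrow> (\<exists>\<alpha>>0. \<forall>x y. \<forall>xs\<in>subdiff f x.
      f y \<ge> f x + xs \<bullet> (y - x) + \<alpha> / 2 * (norm (y - x))^2)"

definition plq_rep :: "(real^'n \<Rightarrow> real) \<Rightarrow> nat \<Rightarrow> (nat \<Rightarrow> (real^'n) set)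
     \<Rightarrow> (nat \<Rightarrow> real^'n^'n) \<Rightarrow> (nat \<Rightarrow> real^'n) \<Rightarrow> (nat \<Rightarrow> real) \<Rightarrow> bool" where
  "plq_rep f p F A a c \<longleftrightarrow>
     convex_on UNIV f \<and>
     (\<forall>i\<in>{1..p}. polyhedron (F i)) \<and>
     (\<Union>i\<in>{1..p}. F i) = UNIV \<and>
     (\<forall>i\<in>{1..p}. transpose (A i) = A i \<and> (\<forall>v. v \<bullet> (A i *v v) \<ge> 0)) \<and>
     (\<forall>i\<in>{1..p}. \<forall>x\<in>F i. f x = 1/2 * (x \<bullet> (A i *v x)) + a i \<bullet> x + c i)"

definition active_set :: "nat \<Rightarrow> (nat \<Rightarrow> (real^'n) set) \<Rightarrow> real^'n \<Rightarrow> (real^'n) set" where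
  "active_set p F x = (\<Inter>i\<in>{i\<in>{1..p}. x \<in> F i}. F i)"

definition bregman :: "(real^'n \<Rightarrow> real) \<Rightarrow> real^'n \<Rightarrow> real^'n \<Rightarrow> real^'n \<Rightarrow> real" where
  "bregman f xs x y = f y - f x - xs \<bullet> (y - x)"

definition bregman_dist_sq :: "(real^'n \<Rightarrow> real) \<Rightarrow> real^'n \<Rightarrow> real^'n \<Rightarrow> (real^'n) set \<Rightarrow> real" where
  "bregman_dist_sq f xs x C = (INF y\<in>C. bregman f xs x y)"

end

theory Submission
  imports Defs
begin

text \<open>
  Near x, the space is covered by the pieces containing x, so every segment from x into
  \<open>F\<^sub>x\<close> can be extended slightly backwards inside one piece \<open>F\<^sub>j\<close> containing both ends.
  On \<open>F\<^sub>j\<close> the function is the quadratic with Hessian \<open>A\<^sub>j\<close>, and the subgradient inequality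
  at the backward point bounds the Bregman distance to y by \<open>(y - x)\<bullet>A\<^sub>j(y - x)\<close>, hence by a
  multiple of \<open>\<parallel>y - x\<parallel>\<^sup>2\<close>; choosing y as a nearest point of \<open>F\<^sub>x \<inter> C\<close> settles that case.
  If \<open>F\<^sub>x \<inter> C = {}\<close>, then x lies in one of finitely many compact sets
  \<open>(\<Inter>i\<in>J. F\<^sub>i) \<inter> B\<^sub>R\<close> disjoint from C, so dist(x, C) is bounded below, while the Bregman
  distance to a fixed point of C is bounded above by local boundedness of subgradients.
\<close>

lemma plq_rep_closed_piece:
  assumes "plq_rep f p F A a c" "i \<in> {1..p}"
  shows "closed (F i)"
  using assms polyhedron_imp_closed unfolding plq_rep_def by blast

lemma plq_rep_covers:
  assumes "plq_rep f p F A a c"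
  obtains i where "i \<in> {1..p}" "x \<in> F i"
proof -
  have "x \<in> (\<Union>i\<in>{1..p}. F i)" using assms unfolding plq_rep_def by blast
  then show thesis using that by blast
qed

lemma plq_rep_quadratic_on_piece:
  assumes "plq_rep f p F A a c" "i \<in> {1..p}" "x \<in> F i"
  shows "f x = 1/2 * (x \<bullet> (A i *v x)) + a i \<bullet> x + c i"
  using assms unfolding plq_rep_def by blast

lemma closed_active_set:
  assumes "plq_rep f p F A a c"
  shows "closed (active_set p F x)"
  unfolding active_set_def using plq_rep_closed_piece[OF assms] by (intro closed_INT) auto

lemma plq_rep_local_common_piece:
  assumes rep: "plq_rep f p F A a c"
  obtains e where "e > 0" "\<And>z. z \<in> ball x e \<Longrightarrow> \<exists>j\<in>{1..p}. x \<in> F j \<and> z \<in> F j"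
proof -
  let ?U = "\<Union>k\<in>{k\<in>{1..p}. x \<notin> F k}. F k"
  have "open (- ?U)"
    using plq_rep_closed_piece[OF rep] by (intro open_Compl closed_UN) auto
  moreover have "x \<in> - ?U" by auto
  ultimately obtain e where e: "e > 0" "ball x e \<subseteq> - ?U"
    using open_contains_ball by blast
  have "\<exists>j\<in>{1..p}. x \<in> F j \<and> z \<in> F j" if "z \<in> ball x e" for z
  proof -
    obtain j where "j \<in> {1..p}" "z \<in> F j" using plq_rep_covers[OF rep] by blast
    moreover have "z \<notin> ?U" using that e by auto
    ultimately show ?thesis by auto
  qed
  with e(1) show thesis using that by blast
qed

lemma quadratic_along_line:
  fixes A :: "real^'n^'n" and x d :: "real^'n"
  shows "1/2 * ((x + t *\<^sub>R d) \<bullet> (A *v (x + t *\<^sub>R d))) + b \<bullet> (x + t *\<^sub>R d) + c0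
   = (1/2 * (x \<bullet> (A *v x)) + b \<bullet> x + c0)
     + t * (1/2 * (x \<bullet> (A *v d) + d \<bullet> (A *v x)) + b \<bullet> d)
     + t^2 / 2 * (d \<bullet> (A *v d))"
  by (simp add: matrix_vector_right_distrib matrix_vector_mult_scaleR inner_add_left
      inner_add_right algebra_simps power2_eq_square)

lemma bregman_nonneg:
  assumes "xs \<in> subdiff f x"
  shows "0 \<le> bregman f xs x y"
  using assms unfolding subdiff_def bregman_def by (auto simp: algebra_simps)

lemma bregman_dist_sq_le_bregman:
  assumes "xs \<in> subdiff f x" "y \<in> C"
  shows "bregman_dist_sq f xs x C \<le> bregman f xs x y"
  unfolding bregman_dist_sq_def
  by (rule cINF_lower[OF _ assms(2)])
    (use bregman_nonneg[OF assms(1)] in \<open>auto intro!: bdd_belowI[of _ 0]\<close>)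

lemma bregman_le_quadratic_form_on_active_set:
  assumes rep: "plq_rep f p F A a c"
    and xs: "xs \<in> subdiff f x" and y: "y \<in> active_set p F x"
  shows "\<exists>j\<in>{1..p}. bregman f xs x y \<le> (y - x) \<bullet> (A j *v (y - x))"
proof -
  obtain e where e: "e > 0" "\<And>z. z \<in> ball x e \<Longrightarrow> \<exists>j\<in>{1..p}. x \<in> F j \<and> z \<in> F j"
    using plq_rep_local_common_piece[OF rep] by blast
  define d where "d = y - x"
  define s where "s = min 1 (e / (2 * (norm d + 1)))"
  have s0: "s > 0" using e(1) by (simp add: s_def add_nonneg_pos)
  have "s * norm d \<le> e / (2 * (norm d + 1)) * (norm d + 1)"
    unfolding s_def using e(1) by (intro mult_mono) (auto simp: add_nonneg_pos)
  also have "\<dots> = e / 2"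
  proof -
    have "norm d + 1 > 0" by (simp add: add_nonneg_pos)
    then show ?thesis by (simp add: field_simps)
  qed
  finally have "x - s *\<^sub>R d \<in> ball x e" using e(1) s0 by (simp add: dist_norm)
  then obtain j where j: "j \<in> {1..p}" "x \<in> F j" "x - s *\<^sub>R d \<in> F j" using e(2) by blast
  have yj: "y \<in> F j" using y j unfolding active_set_def by auto
  define Q where "Q = 1/2 * (x \<bullet> (A j *v x)) + a j \<bullet> x + c j"
  define G where "G = 1/2 * (x \<bullet> (A j *v d) + d \<bullet> (A j *v x)) + a j \<bullet> d"
  define h where "h = d \<bullet> (A j *v d)"
  have h0: "h \<ge> 0" using rep j(1) unfolding plq_rep_def h_def by blast
  have fx: "f x = Q" using plq_rep_quadratic_on_piece[OF rep j(1,2)] by (simp add: Q_def)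
  have fy: "f y = Q + G + h/2"
    using plq_rep_quadratic_on_piece[OF rep j(1) yj] quadratic_along_line[of x 1 d "A j" "a j" "c j"]
    by (simp add: Q_def G_def h_def d_def)
  have "f (x - s *\<^sub>R d) = Q - s * G + s^2/2 * h"
    using plq_rep_quadratic_on_piece[OF rep j(1,3)] quadratic_along_line[of x "-s" d "A j" "a j" "c j"]
    by (simp add: Q_def G_def h_def)
  moreover have "f (x - s *\<^sub>R d) \<ge> f x + xs \<bullet> ((x - s *\<^sub>R d) - x)"
    using xs unfolding subdiff_def by blast
  ultimately have "Q - s * G + s^2/2 * h \<ge> Q - s * (xs \<bullet> d)" using fx by simp
  hence "s * (xs \<bullet> d) \<ge> s * (G - s/2 * h)" by (simp add: algebra_simps power2_eq_square)
  hence "xs \<bullet> d \<ge> G - s/2 * h" using s0 by simp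
  moreover have "s/2 * h \<le> 1/2 * h" using h0 by (intro mult_right_mono) (auto simp: s_def)
  ultimately have "bregman f xs x y \<le> h"
    unfolding bregman_def using fx fy d_def by simp
  thus ?thesis using j(1) by (auto simp: h_def d_def)
qed

lemma quadratic_forms_uniformly_bounded:
  fixes A :: "'i \<Rightarrow> real^'n^'n"
  assumes "finite I"
  obtains K where "K > 0" "\<And>i v. i \<in> I \<Longrightarrow> v \<bullet> (A i *v v) \<le> K * (norm v)^2"
proof -
  have "\<forall>i. \<exists>B. \<forall>v. norm (A i *v v) \<le> B * norm v"
    using linear_bounded[OF matrix_vector_mul_linear] by blast
  then obtain B where B: "\<And>i v. norm (A i *v v) \<le> B i * norm v" by metis
  define K where "K = 1 + (\<Sum>i\<in>I. \<bar>B i\<bar>)"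
  have "v \<bullet> (A i *v v) \<le> K * (norm v)^2" if "i \<in> I" for i v
  proof -
    have "B i \<le> K"
      unfolding K_def using member_le_sum[of i I "\<lambda>i. \<bar>B i\<bar>"] that assms by force
    have "v \<bullet> (A i *v v) \<le> norm v * norm (A i *v v)" by (rule norm_cauchy_schwarz)
    also have "\<dots> \<le> norm v * (B i * norm v)" using B by (intro mult_left_mono) auto
    also have "\<dots> \<le> norm v * (K * norm v)"
      using \<open>B i \<le> K\<close> by (intro mult_left_mono mult_right_mono) auto
    finally show ?thesis by (simp add: power2_eq_square algebra_simps)
  qed
  moreover have "K > 0" unfolding K_def by (simp add: add_pos_nonneg sum_nonneg)
  ultimately show thesis using that by blast
qed

lemma subdiff_norm_le:
  assumes bound: "\<And>z. z \<in> cball x 1 \<Longrightarrow> \<bar>f z\<bar> \<le> B" and xs: "xs \<in> subdiff f x"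
  shows "norm xs \<le> 2 * B"
proof (cases "xs = 0")
  case True
  then show ?thesis using bound[of x] by simp
next
  case False
  define u where "u = (1 / norm xs) *\<^sub>R xs"
  have "x + u \<in> cball x 1" using False by (simp add: u_def dist_norm)
  have "f (x + u) \<ge> f x + xs \<bullet> ((x + u) - x)" using xs unfolding subdiff_def by blast
  moreover have "xs \<bullet> u = norm xs" using False
    by (simp add: u_def inner_scaleR_right dot_square_norm power2_eq_square)
  moreover have "\<bar>f (x + u)\<bar> \<le> B" "\<bar>f x\<bar> \<le> B"
    using bound \<open>x + u \<in> cball x 1\<close> by auto
  ultimately show ?thesis by simp
qed

lemma bregman_bounded_on_cball:
  assumes "continuous_on UNIV f"
  obtains M where "\<And>x xs. x \<in> cball 0 R \<Longrightarrow> xs \<in> subdiff f x \<Longrightarrow> bregman f xs x y \<le> M"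
proof -
  have "bounded (f ` cball 0 (R + 1))"
    using assms by (intro compact_imp_bounded compact_continuous_image)
      (auto intro: continuous_on_subset)
  then obtain B where "\<forall>w\<in>f ` cball 0 (R + 1). norm w \<le> B"
    unfolding bounded_iff by blast
  then have B: "\<And>z. z \<in> cball 0 (R + 1) \<Longrightarrow> \<bar>f z\<bar> \<le> B" by auto
  have "bregman f xs x y \<le> \<bar>f y\<bar> + B + 2 * B * (norm y + R)"
    if x: "x \<in> cball 0 R" and xs: "xs \<in> subdiff f x" for x xs
  proof -
    have "cball x 1 \<subseteq> cball 0 (R + 1)" using x by (simp add: cball_subset_cball_iff dist_commute)
    then have xs_le: "norm xs \<le> 2 * B" using B subdiff_norm_le[OF _ xs] by blast
    have "norm xs * norm (y - x) \<le> 2 * B * (norm y + R)"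
    proof (rule mult_mono[OF xs_le])
      show "norm (y - x) \<le> norm y + R" using x norm_triangle_ineq4[of y x] by simp
      show "0 \<le> 2 * B" using xs_le norm_ge_zero[of xs] by linarith
    qed simp
    then have "\<bar>xs \<bullet> (y - x)\<bar> \<le> 2 * B * (norm y + R)"
      using Cauchy_Schwarz_ineq2[of xs "y - x"] by linarith
    moreover have "\<bar>f x\<bar> \<le> B" using x B by auto
    ultimately show ?thesis unfolding bregman_def by linarith
  qed
  then show thesis using that by blast
qed

lemma infdist_bounded_below_if_active_set_disjoint:
  assumes rep: "plq_rep f p F A a c" and "C \<noteq> {}" "closed C"
  obtains \<delta> where "\<delta> > 0"
    "\<And>x. x \<in> cball 0 R \<Longrightarrow> active_set p F x \<inter> C = {} \<Longrightarrow> \<delta> \<le> infdist x C"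
proof -
  define Jbad where "Jbad = {J. J \<subseteq> {1..p} \<and> J \<noteq> {} \<and> (\<Inter>i\<in>J. F i) \<inter> C = {}}"
  define T where "T = (\<Union>J\<in>Jbad. (\<Inter>i\<in>J. F i) \<inter> cball 0 R)"
  have "finite Jbad" by (rule finite_subset[of _ "Pow {1..p}"]) (auto simp: Jbad_def)
  moreover have "compact ((\<Inter>i\<in>J. F i) \<inter> cball 0 R)" if "J \<in> Jbad" for J
    using that plq_rep_closed_piece[OF rep]
    by (intro closed_Int_compact closed_INT compact_cball) (auto simp: Jbad_def)
  ultimately have "compact T" unfolding T_def by (rule compact_UN)
  moreover have "T \<inter> C = {}" unfolding T_def Jbad_def by auto
  ultimately obtain \<delta> where \<delta>: "\<delta> > 0" "\<And>x y. x \<in> T \<Longrightarrow> y \<in> C \<Longrightarrow> \<delta> \<le> dist x y"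
    using separate_compact_closed \<open>closed C\<close> by metis
  have "\<delta> \<le> infdist x C"
    if x: "x \<in> cball 0 R" and disj: "active_set p F x \<inter> C = {}" for x
  proof -
    define J where "J = {i\<in>{1..p}. x \<in> F i}"
    have "J \<noteq> {}" unfolding J_def using plq_rep_covers[OF rep, of x] by blast
    then have "J \<in> Jbad" using disj unfolding Jbad_def active_set_def J_def by auto
    moreover have "x \<in> (\<Inter>i\<in>J. F i) \<inter> cball 0 R" using x unfolding J_def by auto
    ultimately have "x \<in> T" unfolding T_def by (rule UN_I)
    show ?thesis unfolding infdist_notempty[OF \<open>C \<noteq> {}\<close>]
      by (rule cINF_greatest[OF \<open>C \<noteq> {}\<close>]) (rule \<delta>(2)[OF \<open>x \<in> T\<close>])
  qed
  with \<delta>(1) show thesis using that by blast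
qed

lemma bregman_dist_sq_le_infdist_if_active_set_disjoint:
  assumes rep: "plq_rep f p F A a c" and "C \<noteq> {}" "closed C"
  obtains L where "L > 0" "\<And>x xs. x \<in> cball 0 R \<Longrightarrow> xs \<in> subdiff f x \<Longrightarrow>
      active_set p F x \<inter> C = {} \<Longrightarrow> bregman_dist_sq f xs x C \<le> L * (infdist x C)^2"
proof -
  obtain y where y: "y \<in> C" using assms(2) by blast
  have "continuous_on UNIV f"
    using rep unfolding plq_rep_def by (intro convex_on_continuous) auto
  then obtain M where M: "\<And>x xs. x \<in> cball 0 R \<Longrightarrow> xs \<in> subdiff f x \<Longrightarrow> bregman f xs x y \<le> M"
    using bregman_bounded_on_cball by blast
  obtain \<delta> where \<delta>: "\<delta> > 0"
    "\<And>x. x \<in> cball 0 R \<Longrightarrow> active_set p F x \<inter> C = {} \<Longrightarrow> \<delta> \<le> infdist x C"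
    using infdist_bounded_below_if_active_set_disjoint[OF assms] by blast
  define L where "L = \<bar>M\<bar> / \<delta>^2 + 1"
  have "bregman_dist_sq f xs x C \<le> L * (infdist x C)^2"
    if x: "x \<in> cball 0 R" and xs: "xs \<in> subdiff f x" and disj: "active_set p F x \<inter> C = {}"
    for x xs
  proof -
    have "bregman_dist_sq f xs x C \<le> \<bar>M\<bar> / \<delta>^2 * \<delta>^2"
      using bregman_dist_sq_le_bregman[OF xs y] M[OF x xs] \<delta>(1) by simp
    also have "\<dots> \<le> L * (infdist x C)^2"
      unfolding L_def using \<delta>(1) \<delta>(2)[OF x disj]
      by (intro mult_mono power_mono) auto
    finally show ?thesis .
  qed
  moreover have "L > 0" unfolding L_def by (simp add: add_nonneg_pos)
  ultimately show thesis using that by blast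
qed

lemma bregman_dist_sq_le_infdist_active_set:
  assumes rep: "plq_rep f p F A a c" and "closed C"
  obtains L where "L > 0" "\<And>x xs. xs \<in> subdiff f x \<Longrightarrow> active_set p F x \<inter> C \<noteq> {} \<Longrightarrow>
      bregman_dist_sq f xs x C \<le> L * (infdist x (active_set p F x \<inter> C))^2"
proof -
  obtain K where K: "K > 0" "\<And>i v. i \<in> {1..p} \<Longrightarrow> v \<bullet> (A i *v v) \<le> K * (norm v)^2"
    using quadratic_forms_uniformly_bounded[of "{1..p}"] by blast
  have "bregman_dist_sq f xs x C \<le> K * (infdist x (active_set p F x \<inter> C))^2"
    if xs: "xs \<in> subdiff f x" and ne: "active_set p F x \<inter> C \<noteq> {}" for x xs
  proof -
    have "closed (active_set p F x \<inter> C)" using closed_active_set[OF rep] \<open>closed C\<close> by blast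
    then obtain y where y: "y \<in> active_set p F x \<inter> C"
        "infdist x (active_set p F x \<inter> C) = dist x y"
      using infdist_attains_inf[OF _ ne] by blast
    obtain j where j: "j \<in> {1..p}" "bregman f xs x y \<le> (y - x) \<bullet> (A j *v (y - x))"
      using bregman_le_quadratic_form_on_active_set[OF rep xs] y(1) by blast
    then have "bregman f xs x y \<le> K * (norm (y - x))^2" using K(2)[OF j(1), of "y - x"] by linarith
    then show ?thesis using bregman_dist_sq_le_bregman[OF xs y(1)[THEN IntD2]] y(2)
      by (simp add: dist_norm norm_minus_commute)
  qed
  with K(1) show thesis using that by blast
qed

theorem lemma3p4:
  fixes f :: "real^'n \<Rightarrow> real" and C :: "(real^'n) set"
    and F :: "nat \<Rightarrow> (real^'n) set" and A :: "nat \<Rightarrow> real^'n^'n"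
    and a :: "nat \<Rightarrow> real^'n" and c :: "nat \<Rightarrow> real" and p :: nat
  assumes "strongly_convex f"
    and "plq_rep f p F A a c"
    and "C \<noteq> {}" and "closed C" and "convex C"
    and "R > 0"
  shows "\<exists>L>0. \<forall>x\<in>cball 0 R. \<forall>xs\<in>subdiff f x.
     bregman_dist_sq f xs x C \<le>
       (if active_set p F x \<inter> C = {} then L * (infdist x C)^2
        else L * (infdist x (active_set p F x \<inter> C))^2)"
proof -
  obtain L1 where L1: "L1 > 0" "\<And>x xs. x \<in> cball 0 R \<Longrightarrow> xs \<in> subdiff f x \<Longrightarrow>
      active_set p F x \<inter> C = {} \<Longrightarrow> bregman_dist_sq f xs x C \<le> L1 * (infdist x C)^2"
    using bregman_dist_sq_le_infdist_if_active_set_disjoint[OF assms(2-4)] by blast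
  obtain L2 where L2: "L2 > 0" "\<And>x xs. xs \<in> subdiff f x \<Longrightarrow> active_set p F x \<inter> C \<noteq> {} \<Longrightarrow>
      bregman_dist_sq f xs x C \<le> L2 * (infdist x (active_set p F x \<inter> C))^2"
    using bregman_dist_sq_le_infdist_active_set[OF assms(2,4)] by blast
  show ?thesis
  proof (intro exI[of _ "max L1 L2"] conjI ballI)
    fix x xs assume x: "x \<in> cball 0 R" and xs: "xs \<in> subdiff f x"
    have "L1 * t\<^sup>2 \<le> max L1 L2 * t\<^sup>2" "L2 * t\<^sup>2 \<le> max L1 L2 * t\<^sup>2" for t :: real
      by (simp_all add: mult_right_mono)
    then show "bregman_dist_sq f xs x C \<le>
       (if active_set p F x \<inter> C = {} then max L1 L2 * (infdist x C)^2
        else max L1 L2 * (infdist x (active_set p F x \<inter> C))^2)"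
      using L1(2)[OF x xs] L2(2)[OF xs] by (auto intro: order_trans)
  qed (use L1(1) in simp)
qed

end
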